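(* Let $l\ge1$. For all $\alpha,\beta\ge1$, $\widetilde\epsilon_{t^l}(\mathcal{Q}_{\alpha,\beta})\subset\mathcal{P}_{\alpha',\beta'}$, where $\alpha'=\alpha+(n-1)l\beta$ and $\beta'=\beta$.
   Context: Let $k$ be a field of characteristic zero, $n\ge3$, $k[t,\mathbf{x}]=k[t,x_1,\ldots,x_n]$. Let $\widetilde D=\sum_{j=1}^{n-1}(n-j)\,x_{j+1}\,\partial/\partial x_j$ as a derivation of $k[t,\mathbf{x}]$ killing $t$, and $\widetilde\epsilon_{t^l}=\exp(t^l\widetilde D)$, $\exp E(g)=\sum_{i\ge0}E^i(g)/i!$. For nonzero $p=\sum u_{i_0,\ldots,i_n}t^{i_0}x_1^{i_1}\cdots x_n^{i_n}$, $\mathrm{supp}(p)$ is the set of exponent vectors with nonzero coefficient, $\deg_{\mathbf w}(p)=\max\{\sum_j i_jw_j:(i_0,\ldots,i_n)\in\mathrm{supp}(p)\}$, and $\mathrm{lt}(p)$ is the leading term for the lexicographic order with $t>x_1>\cdots>x_n$. Let $\mathbf{w}_1=(1,\ldots,1)$, $\mathbf{w}_2$ the weight with $n-2$ on $t$ and $2n-j-1$ on $x_j$, and $\mathbf{w}_3$ the weight with $0$ on $t$ and $1$ on each $x_j$. For $\alpha,\beta\ge1$: $\mathcal{P}_{\alpha,\beta}$ is the set of nonzero $p$ with $\deg_{\mathbf{w}_1}(p)\le\alpha+\beta$, $\deg_{\mathbf{w}_2}(p)\le(n-2)\alpha+(n-1)\beta$ and $\mathrm{lt}(p)\in k^*t^\alpha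 x_n^\beta$; $\mathcal{Q}_{\alpha,\beta}$ is the set of nonzero $p$ with $\deg_{\mathbf{w}_3}(p)\le\beta$ and $\mathrm{lt}(p)\in k^*t^\alpha x_1^\beta$. *)

theory Defs
  imports Main "HOL-Library.Poly_Mapping"
begin

text \<open>Exponent vectors are finitely supported maps nat =>0 nat;
index 0 is the variable t and index j (1 <= j <= n) is x_j.\<close>

type_synonym 'k mpoly = "(nat \<Rightarrow>\<^sub>0 nat) \<Rightarrow>\<^sub>0 'k"

definition in_ring :: "nat \<Rightarrow> 'k::zero mpoly \<Rightarrow> bool" where
  "in_ring n p \<longleftrightarrow> (\<forall>m\<in>Poly_Mapping.keys p. Poly_Mapping.keys m \<subseteq> {0..n})"

definition Var :: "nat \<Rightarrow> 'k::comm_ring_1 mpoly" where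
  "Var i = Poly_Mapping.single (Poly_Mapping.single i 1) 1"

definition Const :: "'k::comm_ring_1 \<Rightarrow> 'k mpoly" where
  "Const c = Poly_Mapping.single 0 c"

text \<open>The derivation Dtilde = sum_{j=1}^{n-1} (n-j) x_{j+1} d/dx_j (kills t),
defined on monomials and extended linearly.\<close>
definition Dtilde :: "nat \<Rightarrow> 'k::comm_ring_1 mpoly \<Rightarrow> 'k mpoly" where
  "Dtilde n p = (\<Sum>m\<in>Poly_Mapping.keys p. \<Sum>j\<in>{1..n-1}.
      Poly_Mapping.single (m - Poly_Mapping.single j 1 + Poly_Mapping.single (Suc j) 1)
        (of_nat ((n - j) * Poly_Mapping.lookup m j) * Poly_Mapping.lookup p m))"

text \<open>exp E (g) = sum_{i>=0} E^i(g)/i!, a sum with finitely many nonzero terms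
for locally nilpotent E (summation over the nonzero terms).\<close>
definition expE :: "('k::field_char_0 mpoly \<Rightarrow> 'k mpoly) \<Rightarrow> 'k mpoly \<Rightarrow> 'k mpoly" where
  "expE E g = (\<Sum>i\<in>{i. (E ^^ i) g \<noteq> 0}. Const (inverse (of_nat (fact i))) * (E ^^ i) g)"

definition eps :: "nat \<Rightarrow> nat \<Rightarrow> 'k::field_char_0 mpoly \<Rightarrow> 'k mpoly" where
  "eps n l = expE (\<lambda>g. Var 0 ^ l * Dtilde n g)"

definition wdeg :: "nat \<Rightarrow> (nat \<Rightarrow> nat) \<Rightarrow> 'k::zero mpoly \<Rightarrow> nat" where
  "wdeg n w p = Max ((\<lambda>m. \<Sum>j\<in>{0..n}. Poly_Mapping.lookup m j * w j) ` Poly_Mapping.keys p)"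

definition w1 :: "nat \<Rightarrow> nat" where "w1 j = 1"
definition w2 :: "nat \<Rightarrow> nat \<Rightarrow> nat" where
  "w2 n j = (if j = 0 then n - 2 else 2 * n - j - 1)"
definition w3 :: "nat \<Rightarrow> nat" where "w3 j = (if j = 0 then 0 else 1)"

definition lex_less :: "nat \<Rightarrow> (nat \<Rightarrow>\<^sub>0 nat) \<Rightarrow> (nat \<Rightarrow>\<^sub>0 nat) \<Rightarrow> bool" where
  "lex_less n m m' \<longleftrightarrow> (\<exists>i\<le>n. (\<forall>j<i. Poly_Mapping.lookup m j = Poly_Mapping.lookup m' j) \<and> Poly_Mapping.lookup m i < Poly_Mapping.lookup m' i)"

definition lt_is :: "nat \<Rightarrow> 'k::zero mpoly \<Rightarrow> (nat \<Rightarrow>\<^sub>0 nat) \<Rightarrow> bool" where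
  "lt_is n p e \<longleftrightarrow> e \<in> Poly_Mapping.keys p \<and> (\<forall>m\<in>Poly_Mapping.keys p. m \<noteq> e \<longrightarrow> lex_less n m e)"

definition Pset :: "nat \<Rightarrow> nat \<Rightarrow> nat \<Rightarrow> 'k::zero mpoly set" where
  "Pset n \<alpha> \<beta> = {p. in_ring n p \<and> p \<noteq> 0 \<and> wdeg n w1 p \<le> \<alpha> + \<beta>
     \<and> wdeg n (w2 n) p \<le> (n - 2) * \<alpha> + (n - 1) * \<beta>
     \<and> lt_is n p (Poly_Mapping.single 0 \<alpha> + Poly_Mapping.single n \<beta>)}"

definition Qset :: "nat \<Rightarrow> nat \<Rightarrow> nat \<Rightarrow> 'k::zero mpoly set" where
  "Qset n \<alpha> \<beta> = {p. in_ring n p \<and> p \<noteq> 0 \<and> wdeg n w3 p \<le> \<beta>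
     \<and> lt_is n p (Poly_Mapping.single 0 \<alpha> + Poly_Mapping.single 1 \<beta>)}"

end

theory Submission
  imports Defs
begin

text \<open>
  Put \<open>xdeg m = \<Sum>\<^sub>j m\<^sub>j\<close> and \<open>xrank m = \<Sum>\<^sub>j (n - j) m\<^sub>j\<close> over the
  \<open>x\<close>-exponents of a monomial \<open>m\<close>. The derivation \<open>Dtilde\<close> trades a factor \<open>x\<^sub>j\<close> for
  \<open>x\<^sub>j\<^sub>+\<^sub>1\<close>, so each application of \<open>tlD = t\<^sup>l Dtilde\<close> keeps \<open>xdeg\<close>, lowers
  \<open>xrank\<close> by one and raises the \<open>t\<close>-degree by \<open>l\<close>. For \<open>p \<in> Q\<^sub>\<alpha>\<^sub>,\<^sub>\<beta>\<close> every
  monomial of \<open>tlD\<^sup>i p\<close> therefore has \<open>t\<close>-degree at most \<open>\<alpha> + l i\<close>, \<open>xdeg \<le> \<beta>\<close>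
  and \<open>xrank + i \<le> (n - 1) xdeg\<close>; in particular \<open>i \<le> (n - 1) \<beta>\<close>. These bounds give both
  weighted-degree estimates, and they show that the largest possible \<open>t\<close>-degree
  \<open>\<alpha>' = \<alpha> + (n - 1) l \<beta>\<close> is attained only by \<open>t\<^sup>\<alpha>\<^sup>' x\<^sub>n\<^sup>\<beta>\<close> and only in the term
  \<open>i = (n - 1) \<beta>\<close> of the exponential. Its coefficient there is a positive integer times
  the leading coefficient of \<open>p\<close>, because all coefficients of \<open>Dtilde\<close> are positive
  integers; in characteristic zero it does not vanish.
\<close>

abbreviation lookup where "lookup \<equiv> Poly_Mapping.lookup"
abbreviation single where "single \<equiv> Poly_Mapping.single"
abbreviation keys where "keys \<equiv> Poly_Mapping.keys"

lemma lookup_Const_mult: "lookup (Const c * q) m = c * lookup q m"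
  unfolding Const_def mult_map_scale_conv_mult[symmetric]
  by (simp add: Poly_Mapping.map.rep_eq when_def)

lemma Var_0_power: "(Var 0 :: 'k::comm_ring_1 mpoly) ^ l = single (single 0 l) 1"
  by (induction l) (simp_all add: Var_def mult_single flip: single_add)

lemma lookup_Var_0_power_mult:
  fixes q :: "'k::comm_ring_1 mpoly"
  shows "lookup (Var 0 ^ l * q) x = (if l \<le> lookup x 0 then lookup q (x - single 0 l) else 0)"
proof -
  have shift: "x = single 0 l + y \<longleftrightarrow> l \<le> lookup x 0 \<and> y = x - single 0 l" for y :: "nat \<Rightarrow>\<^sub>0 nat"
    by (auto simp: poly_mapping_eq_iff fun_eq_iff lookup_add lookup_minus lookup_single when_def)
  have "lookup (Var 0 ^ l * q) x = (\<Sum>y. lookup q y when x = single 0 l + y)"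
    by (simp add: Var_0_power lookup_mult lookup_single when_mult)
  also have "\<dots> = (if l \<le> lookup x 0 then lookup q (x - single 0 l) else 0)"
    by (simp add: shift when_def conj_commute)
  finally show ?thesis .
qed

definition move :: "nat \<Rightarrow> nat \<Rightarrow> (nat \<Rightarrow>\<^sub>0 nat) \<Rightarrow> (nat \<Rightarrow>\<^sub>0 nat)" where
  "move a b m = m - single a 1 + single b 1"

lemma lookup_move:
  "lookup (move a b m) k = lookup m k - (if k = a then 1 else 0) + (if k = b then 1 else 0)"
  by (simp add: move_def lookup_add lookup_minus lookup_single when_def)

lemma keys_move: "keys (move a b m) \<subseteq> keys m \<union> {b}"
  by (auto simp: in_keys_iff lookup_move split: if_splits)

lemma move_add_single: "1 \<le> lookup m a \<Longrightarrow> move a b m + single a 1 = m + single b 1"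
  by (rule poly_mapping_eqI) (simp add: lookup_move lookup_add lookup_single when_def)

lemma move_move: "1 \<le> lookup m a \<Longrightarrow> move b a (move a b m) = m"
  by (rule poly_mapping_eqI) (simp add: lookup_move)

lemma move_eq_iff:
  assumes "1 \<le> lookup m a"
  shows "move a b m = x \<longleftrightarrow> 1 \<le> lookup x b \<and> m = move b a x"
  using assms move_move[of m a b] move_move[of x b a] by (auto simp: lookup_move)

lemma keys_Dtilde:
  "keys (Dtilde n q) \<subseteq> {move j (Suc j) m | j m. j \<in> {1..n-1} \<and> m \<in> keys q \<and> 1 \<le> lookup m j}"
proof -
  have "keys (Dtilde n q) \<subseteq> (\<Union>m\<in>keys q. \<Union>j\<in>{1..n-1}.
      keys (single (move j (Suc j) m) (of_nat ((n - j) * lookup m j) * lookup q m)))"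
    unfolding Dtilde_def move_def[symmetric]
    by (intro order.trans[OF keys_sum] UN_mono order.refl keys_sum)
  also have "\<dots> \<subseteq> {move j (Suc j) m | j m. j \<in> {1..n-1} \<and> m \<in> keys q \<and> 1 \<le> lookup m j}"
    by (clarsimp split: if_splits) (metis Suc_leI gr0I mult_not_zero of_nat_0)
  finally show ?thesis .
qed

lemma lookup_Dtilde:
  "lookup (Dtilde n q) x = (\<Sum>j\<in>{1..n-1}. if 1 \<le> lookup x (Suc j)
     then of_nat ((n - j) * (lookup x j + 1)) * lookup q (move (Suc j) j x) else 0)"
proof -
  have summand: "(of_nat ((n - j) * lookup m j) * lookup q m when move j (Suc j) m = x)
    = (of_nat ((n - j) * lookup m j) * lookup q m when m = move (Suc j) j x \<and> 1 \<le> lookup x (Suc j))"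
    for j m
    by (cases "lookup m j = 0") (auto simp: move_eq_iff conj_commute)
  have "lookup (Dtilde n q) x = (\<Sum>j\<in>{1..n-1}. \<Sum>m\<in>keys q.
      of_nat ((n - j) * lookup m j) * lookup q m when m = move (Suc j) j x \<and> 1 \<le> lookup x (Suc j))"
    unfolding Dtilde_def move_def[symmetric] lookup_sum lookup_single summand
    by (rule sum.swap)
  also have "\<dots> = (\<Sum>j\<in>{1..n-1}. if 1 \<le> lookup x (Suc j)
     then of_nat ((n - j) * (lookup x j + 1)) * lookup q (move (Suc j) j x) else 0)"
    by (rule sum.cong) (auto simp: when_def in_keys_iff lookup_move distrib_left distrib_right)
  finally show ?thesis .
qed

definition tlD :: "nat \<Rightarrow> nat \<Rightarrow> 'k::comm_ring_1 mpoly \<Rightarrow> 'k mpoly" where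
  "tlD n l q = Var 0 ^ l * Dtilde n q"

lemma eps_eq_expE_tlD: "eps n l = expE (tlD n l)"
  by (simp add: eps_def tlD_def [abs_def])

lemma keys_tlD:
  "keys (tlD n l q) \<subseteq>
     {single 0 l + move j (Suc j) m | j m. j \<in> {1..n-1} \<and> m \<in> keys q \<and> 1 \<le> lookup m j}"
  unfolding tlD_def Var_0_power
  using keys_mult[of "single (single 0 l) 1" "Dtilde n q"] keys_Dtilde[of n q] by simp blast

lemma lookup_tlD:
  "lookup (tlD n l q) x = (if l \<le> lookup x 0 then (\<Sum>j\<in>{1..n-1}. if 1 \<le> lookup x (Suc j)
     then of_nat ((n - j) * (lookup x j + 1)) * lookup q (move (Suc j) j (x - single 0 l)) else 0)
     else 0)"
  unfolding tlD_def lookup_Var_0_power_mult lookup_Dtilde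
  by (auto intro!: sum.cong simp: lookup_minus lookup_single)

definition xwdeg :: "nat \<Rightarrow> (nat \<Rightarrow> nat) \<Rightarrow> (nat \<Rightarrow>\<^sub>0 nat) \<Rightarrow> nat" where
  "xwdeg n c m = (\<Sum>k\<in>{1..n}. c k * lookup m k)"

abbreviation xdeg :: "nat \<Rightarrow> (nat \<Rightarrow>\<^sub>0 nat) \<Rightarrow> nat" where
  "xdeg n \<equiv> xwdeg n (\<lambda>_. 1)"

abbreviation xrank :: "nat \<Rightarrow> (nat \<Rightarrow>\<^sub>0 nat) \<Rightarrow> nat" where
  "xrank n \<equiv> xwdeg n (\<lambda>k. n - k)"

lemma xwdeg_add: "xwdeg n c (a + b) = xwdeg n c a + xwdeg n c b"
  by (simp add: xwdeg_def lookup_add sum.distrib distrib_left)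

lemma xwdeg_single: "xwdeg n c (single k v) = (if k \<in> {1..n} then c k * v else 0)"
proof -
  have "xwdeg n c (single k v) = (\<Sum>i\<in>{1..n}. if i = k then c k * v else 0)"
    unfolding xwdeg_def lookup_single by (rule sum.cong) (auto simp: when_def)
  then show ?thesis by simp
qed

lemma xwdeg_diff_single_0: "xwdeg n c (m - single 0 l) = xwdeg n c m"
  unfolding xwdeg_def by (rule sum.cong) (auto simp: lookup_minus lookup_single)

lemma xwdeg_move:
  assumes "1 \<le> lookup m a" "a \<in> {1..n}" "b \<in> {1..n}"
  shows "xwdeg n c (move a b m) + c a = xwdeg n c m + c b"
  using arg_cong[OF move_add_single[OF assms(1)], of "xwdeg n c"] assms(2,3)
  by (simp add: xwdeg_add xwdeg_single)

lemma xwdeg_eq_0_iff: "xwdeg n c m = 0 \<longleftrightarrow> (\<forall>k\<in>{1..n}. c k = 0 \<or> lookup m k = 0)"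
  by (simp add: xwdeg_def)

lemma xrank_add_xwdeg: "xrank n m + xwdeg n (\<lambda>k. k - 1) m = (n - 1) * xdeg n m"
  unfolding xwdeg_def sum_distrib_left sum.distrib[symmetric]
  by (rule sum.cong) (auto simp: add_mult_distrib[symmetric])

lemma xrank_le: "xrank n m \<le> (n - 1) * xdeg n m"
  using xrank_add_xwdeg[of n m] by linarith

lemma poly_mapping_eq_two_singles:
  assumes "keys m \<subseteq> {a, b}" "a \<noteq> b"
  shows "m = single a (lookup m a) + single b (lookup m b)"
proof (rule poly_mapping_eqI)
  fix k
  have "k \<notin> {a, b} \<Longrightarrow> lookup m k = 0"
    using assms(1) by (auto simp: in_keys_iff)
  then show "lookup m k = lookup (single a (lookup m a) + single b (lookup m b)) k"
    using assms(2) by (cases "k = a"; cases "k = b") (auto simp: lookup_add lookup_single)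
qed

lemma xrank_eq_0:
  assumes "keys m \<subseteq> {0..n}" "xrank n m = 0" "1 \<le> n"
  shows "m = single 0 (lookup m 0) + single n (xdeg n m)"
proof -
  have "keys m \<subseteq> {0, n}"
  proof
    fix k assume "k \<in> keys m"
    then have "k \<le> n" "lookup m k \<noteq> 0"
      using assms(1) by (auto simp only: in_keys_iff[symmetric] subset_iff atLeastAtMost_iff)
    with assms(2) show "k \<in> {0, n}"
      unfolding xwdeg_eq_0_iff by (cases "k = 0") (auto dest: bspec[of _ _ k])
  qed
  then have m: "m = single 0 (lookup m 0) + single n (lookup m n)"
    using assms(3) by (intro poly_mapping_eq_two_singles) auto
  have "xdeg n m = lookup m n"
    using assms(3) by (subst m) (simp add: xwdeg_add xwdeg_single)
  with m show ?thesis by simp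
qed

lemma xrank_eq_max:
  assumes "keys m \<subseteq> {0..n}" "xrank n m = (n - 1) * xdeg n m" "1 \<le> n"
  shows "m = single 0 (lookup m 0) + single 1 (xdeg n m)"
proof -
  have w: "xwdeg n (\<lambda>k. k - 1) m = 0"
    using xrank_add_xwdeg[of n m] assms(2) by linarith
  have "keys m \<subseteq> {0, 1}"
  proof
    fix k assume "k \<in> keys m"
    then have "k \<le> n" "lookup m k \<noteq> 0"
      using assms(1) by (auto simp only: in_keys_iff[symmetric] subset_iff atLeastAtMost_iff)
    with w show "k \<in> {0, 1}"
      unfolding xwdeg_eq_0_iff by (cases "k = 0") (auto dest: bspec[of _ _ k])
  qed
  then have m: "m = single 0 (lookup m 0) + single 1 (lookup m 1)"
    by (intro poly_mapping_eq_two_singles) auto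
  have "xdeg n m = lookup m 1"
    using assms(3) by (subst m) (simp add: xwdeg_add xwdeg_single)
  with m show ?thesis by simp
qed

lemma xrank_less_imp_lookup_Suc:
  assumes "xrank n m < (n - 1) * xdeg n m"
  obtains j where "j \<in> {1..n-1}" "1 \<le> lookup m (Suc j)"
proof -
  have "xwdeg n (\<lambda>k. k - 1) m \<noteq> 0"
    using xrank_add_xwdeg[of n m] assms by linarith
  then obtain k where "k \<in> {1..n}" "k - 1 \<noteq> 0" "lookup m k \<noteq> 0"
    by (auto simp: xwdeg_eq_0_iff)
  then show thesis
    by (intro that[of "k - 1"]) auto
qed

lemma keys_tlD_pow:
  assumes "m \<in> keys ((tlD n l ^^ i) q)"
  obtains m0 where "m0 \<in> keys q" "lookup m 0 = lookup m0 0 + l * i"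
    "xdeg n m = xdeg n m0" "xrank n m + i = xrank n m0" "keys m \<subseteq> keys m0 \<union> {0..n}"
  using assms
proof (induction i arbitrary: m thesis)
  case 0
  then show ?case by auto
next
  case (Suc i)
  obtain j \<mu> where j: "j \<in> {1..n-1}" and \<mu>: "\<mu> \<in> keys ((tlD n l ^^ i) q)" "1 \<le> lookup \<mu> j"
    and m: "m = single 0 l + move j (Suc j) \<mu>"
    using Suc.prems(2) keys_tlD[of n l "(tlD n l ^^ i) q"] by auto
  obtain m0 where m0: "m0 \<in> keys q" "lookup \<mu> 0 = lookup m0 0 + l * i"
    "xdeg n \<mu> = xdeg n m0" "xrank n \<mu> + i = xrank n m0" "keys \<mu> \<subseteq> keys m0 \<union> {0..n}"
    using Suc.IH[OF _ \<mu>(1)] by blast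
  have "j < n"
    using j by auto
  then have weights: "xwdeg n c m + c j = xwdeg n c \<mu> + c (Suc j)" for c
    using xwdeg_move[OF \<mu>(2), of n "Suc j" c] j by (simp add: m xwdeg_add xwdeg_single)
  have "lookup m 0 = lookup \<mu> 0 + l"
    using j by (simp add: m lookup_add lookup_move)
  moreover have "xrank n m + 1 = xrank n \<mu>"
    using weights[of "\<lambda>k. n - k"] j by auto
  moreover have "keys m \<subseteq> {0} \<union> keys \<mu> \<union> {Suc j}"
    using keys_add[of "single 0 l" "move j (Suc j) \<mu>"] keys_move[of j "Suc j" \<mu>]
      keys_single[of 0 l] unfolding m by (auto split: if_splits)
  then have "keys m \<subseteq> keys \<mu> \<union> {0..n}"
    using \<open>j < n\<close> by auto
  ultimately show ?case
    using m0 weights[of "\<lambda>_. 1"] by (intro Suc.prems(1)[of m0]) auto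
qed

lemma tlD_predecessor:
  fixes l :: nat
  assumes "keys x \<subseteq> {0..n}" "j \<in> {1..n-1}" "1 \<le> lookup x (Suc j)"
  defines "y \<equiv> move (Suc j) j (x - single 0 l)"
  shows "keys y \<subseteq> {0..n}" "lookup y 0 = lookup x 0 - l" "xdeg n y = xdeg n x"
    "xrank n y = xrank n x + 1"
proof -
  have "1 \<le> lookup (x - single 0 l) (Suc j)"
    using assms(3) by (simp add: lookup_minus lookup_single)
  then have weights: "xwdeg n c y + c (Suc j) = xwdeg n c x + c j" for c
    using xwdeg_move[of "x - single 0 l" "Suc j" n j c] assms(2)
    by (auto simp: y_def xwdeg_diff_single_0)
  have "keys y \<subseteq> keys (x - single 0 l) \<union> {j}"
    unfolding y_def by (rule keys_move)
  also have "\<dots> \<subseteq> keys x \<union> {0, j}"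
    using keys_diff[of x "single 0 l"] by (auto split: if_splits)
  also have "\<dots> \<subseteq> {0..n}"
    using assms(1,2) by auto
  finally show "keys y \<subseteq> {0..n}" .
  show "lookup y 0 = lookup x 0 - l"
    using assms(2) by (simp add: y_def lookup_move lookup_minus lookup_single)
  show "xdeg n y = xdeg n x" "xrank n y = xrank n x + 1"
    using weights[of "\<lambda>_. 1"] weights[of "\<lambda>k. n - k"] assms(2) by auto
qed

lemma lookup_tlD_pow_extremal:
  fixes q :: "'k::comm_ring_1 mpoly"
  assumes "1 \<le> n" "keys x \<subseteq> {0..n}" "lookup x 0 = a + l * i"
    "xrank n x + i = (n - 1) * xdeg n x"
  shows "\<exists>c>0. lookup ((tlD n l ^^ i) q) x = of_nat c * lookup q (single 0 a + single 1 (xdeg n x))"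
  using assms(2-)
proof (induction i arbitrary: x)
  case 0
  then have "x = single 0 (lookup x 0) + single 1 (xdeg n x)"
    by (intro xrank_eq_max assms(1)) simp_all
  then show ?case
    using 0(2) by (intro exI[of _ 1]) simp
next
  case (Suc i)
  define y where "y j = move (Suc j) j (x - single 0 l)" for j
  have y: "keys (y j) \<subseteq> {0..n} \<and> lookup (y j) 0 = a + l * i \<and> xdeg n (y j) = xdeg n x
      \<and> xrank n (y j) + i = (n - 1) * xdeg n (y j)"
    if "j \<in> {1..n-1}" "1 \<le> lookup x (Suc j)" for j
    using tlD_predecessor[OF Suc.prems(1) that, of l] Suc.prems(2,3) unfolding y_def by auto
  have "\<forall>j\<in>{1..n-1}. \<exists>c. 1 \<le> lookup x (Suc j) \<longrightarrow> c > 0 \<and>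
      lookup ((tlD n l ^^ i) q) (y j) = of_nat c * lookup q (single 0 a + single 1 (xdeg n x))"
    using Suc.IH y by metis
  then obtain c where c: "\<And>j. j \<in> {1..n-1} \<Longrightarrow> 1 \<le> lookup x (Suc j) \<Longrightarrow> c j > 0 \<and>
      lookup ((tlD n l ^^ i) q) (y j) = of_nat (c j) * lookup q (single 0 a + single 1 (xdeg n x))"
    by metis
  define d where
    "d j = (if 1 \<le> lookup x (Suc j) then (n - j) * (lookup x j + 1) * c j else 0)" for j
  have "lookup ((tlD n l ^^ Suc i) q) x = (\<Sum>j\<in>{1..n-1}. if 1 \<le> lookup x (Suc j)
      then of_nat ((n - j) * (lookup x j + 1)) * lookup ((tlD n l ^^ i) q) (y j) else 0)"
    using Suc.prems(2) unfolding y_def by (simp add: lookup_tlD)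
  also have "\<dots> = of_nat (\<Sum>j\<in>{1..n-1}. d j) * lookup q (single 0 a + single 1 (xdeg n x))"
    unfolding of_nat_sum sum_distrib_right by (rule sum.cong) (auto simp: d_def c)
  finally have lookup_x: "lookup ((tlD n l ^^ Suc i) q) x
    = of_nat (\<Sum>j\<in>{1..n-1}. d j) * lookup q (single 0 a + single 1 (xdeg n x))" .
  obtain j where j: "j \<in> {1..n-1}" "1 \<le> lookup x (Suc j)"
    using xrank_less_imp_lookup_Suc[of n x] Suc.prems(3) by auto
  then have "0 < d j"
    using c by (auto simp: d_def)
  also have "d j \<le> (\<Sum>j\<in>{1..n-1}. d j)"
    using j(1) by (intro member_le_sum) auto
  finally show ?case
    using lookup_x by blast
qed

lemma lookup_expE:
  "lookup (expE E g) x
     = (\<Sum>i\<in>{i. (E ^^ i) g \<noteq> 0}. inverse (of_nat (fact i)) * lookup ((E ^^ i) g) x)"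
  unfolding expE_def lookup_sum lookup_Const_mult ..

lemma keys_expE:
  assumes "x \<in> keys (expE E g)"
  obtains i where "x \<in> keys ((E ^^ i) g)"
proof -
  have "lookup (expE E g) x \<noteq> 0"
    using assms by (simp add: in_keys_iff)
  then obtain i where "inverse (of_nat (fact i)) * lookup ((E ^^ i) g) x \<noteq> 0"
    unfolding lookup_expE by (rule sum.not_neutral_contains_not_neutral)
  then show thesis
    by (intro that) (simp add: in_keys_iff)
qed

lemma lookup_expE_single_power:
  assumes "finite {i. (E ^^ i) g \<noteq> 0}" "\<And>i. i \<noteq> k \<Longrightarrow> lookup ((E ^^ i) g) x = 0"
  shows "lookup (expE E g) x = inverse (of_nat (fact k)) * lookup ((E ^^ k) g) x"
proof -
  have "lookup (expE E g) x = (\<Sum>i\<in>{i. (E ^^ i) g \<noteq> 0}.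
      if i = k then inverse (of_nat (fact k)) * lookup ((E ^^ k) g) x else 0)"
    unfolding lookup_expE using assms(2) by (intro sum.cong) auto
  also have "\<dots> = inverse (of_nat (fact k)) * lookup ((E ^^ k) g) x"
    using assms(1) by (subst sum.delta) auto
  finally show ?thesis .
qed

lemma lex_less_lookup_0_le:
  assumes "lex_less n m e"
  shows "lookup m 0 \<le> lookup e 0"
proof -
  obtain i where "\<forall>j<i. lookup m j = lookup e j" "lookup m i < lookup e i"
    using assms unfolding lex_less_def by blast
  then show ?thesis
    by (cases "i = 0") auto
qed

lemma lex_less_if_lookup_0_less: "lookup m 0 < lookup e 0 \<Longrightarrow> lex_less n m e"
  unfolding lex_less_def by auto

lemma wdeg_le:
  assumes "p \<noteq> 0" "\<And>m. m \<in> keys p \<Longrightarrow> (\<Sum>j\<in>{0..n}. lookup m j * w j) \<le> b"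
  shows "wdeg n w p \<le> b"
  unfolding wdeg_def using assms by (intro Max.boundedI) auto

lemma le_wdeg: "m \<in> keys p \<Longrightarrow> (\<Sum>j\<in>{0..n}. lookup m j * w j) \<le> wdeg n w p"
  unfolding wdeg_def by (intro Max_ge) auto

lemma sum_weight_split:
  "(\<Sum>j\<in>{0..n}. lookup m j * w j) = lookup m 0 * w 0 + xwdeg n w m"
  unfolding xwdeg_def using sum.atLeast_Suc_atMost[OF le0, of "\<lambda>j. lookup m j * w j" n]
  by (simp add: mult.commute)

lemma sum_w1: "(\<Sum>j\<in>{0..n}. lookup m j * w1 j) = lookup m 0 + xdeg n m"
  unfolding sum_weight_split by (simp add: w1_def [abs_def])

lemma sum_w3: "(\<Sum>j\<in>{0..n}. lookup m j * w3 j) = xdeg n m"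
  unfolding sum_weight_split xwdeg_def by (simp add: w3_def)

lemma sum_w2:
  "(\<Sum>j\<in>{0..n}. lookup m j * w2 n j) = (n - 2) * lookup m 0 + (n - 1) * xdeg n m + xrank n m"
proof -
  have "w2 n k * lookup m k = (n - 1) * (1 * lookup m k) + (n - k) * lookup m k"
    if "k \<in> {1..n}" for k
  proof -
    have "w2 n k = (n - 1) + (n - k)"
      using that by (auto simp: w2_def)
    then show ?thesis
      by (simp only: add_mult_distrib mult_1)
  qed
  then have "xwdeg n (w2 n) m = (n - 1) * xdeg n m + xrank n m"
    unfolding xwdeg_def sum_distrib_left sum.distrib[symmetric] by (rule sum.cong[OF refl])
  then show ?thesis
    unfolding sum_weight_split by (simp add: w2_def [of n 0])
qed

lemma Qset_keys:
  assumes "p \<in> Qset n \<alpha> \<beta>" "m \<in> keys p"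
  shows "keys m \<subseteq> {0..n}" "lookup m 0 \<le> \<alpha>" "xdeg n m \<le> \<beta>"
proof -
  show "keys m \<subseteq> {0..n}"
    using assms unfolding Qset_def in_ring_def by blast
  show "xdeg n m \<le> \<beta>"
    using assms le_wdeg[OF assms(2), where n = n and w = w3] unfolding Qset_def sum_w3 by simp
  have lead: "lt_is n p (single 0 \<alpha> + single 1 \<beta>)"
    using assms(1) unfolding Qset_def by blast
  show "lookup m 0 \<le> \<alpha>"
  proof (cases "m = single 0 \<alpha> + single 1 \<beta>")
    case False
    then have "lex_less n m (single 0 \<alpha> + single 1 \<beta>)"
      using lead assms(2) unfolding lt_is_def by blast
    from lex_less_lookup_0_le[OF this] show ?thesis
      by (simp add: lookup_add lookup_single)
  qed (simp add: lookup_add lookup_single)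
qed

lemma keys_tlD_pow_Qset:
  assumes "p \<in> Qset n \<alpha> \<beta>" "m \<in> keys ((tlD n l ^^ i) p)"
  shows "keys m \<subseteq> {0..n}" "lookup m 0 \<le> \<alpha> + l * i" "xdeg n m \<le> \<beta>"
    "xrank n m + i \<le> (n - 1) * xdeg n m"
proof -
  obtain m0 where m0: "m0 \<in> keys p" "lookup m 0 = lookup m0 0 + l * i"
    "xdeg n m = xdeg n m0" "xrank n m + i = xrank n m0" "keys m \<subseteq> keys m0 \<union> {0..n}"
    using keys_tlD_pow[OF assms(2)] by blast
  note Q = Qset_keys[OF assms(1) m0(1)]
  show "keys m \<subseteq> {0..n}" "lookup m 0 \<le> \<alpha> + l * i" "xdeg n m \<le> \<beta>"
    using m0 Q by auto
  show "xrank n m + i \<le> (n - 1) * xdeg n m"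
    using m0(3,4) xrank_le[of n m0] by simp
qed

lemma keys_eps_Qset:
  assumes "p \<in> Qset n \<alpha> \<beta>" "m \<in> keys (eps n l p)"
  obtains i where "i \<le> (n - 1) * \<beta>" "keys m \<subseteq> {0..n}" "lookup m 0 \<le> \<alpha> + l * i"
    "xdeg n m \<le> \<beta>" "xrank n m + i \<le> (n - 1) * xdeg n m"
proof -
  obtain i where i: "m \<in> keys ((tlD n l ^^ i) p)"
    using keys_expE assms(2) unfolding eps_eq_expE_tlD by blast
  note facts = keys_tlD_pow_Qset[OF assms(1) i]
  have "i \<le> (n - 1) * \<beta>"
    using facts(3,4) mult_le_mono2[OF facts(3), of "n - 1"] by linarith
  with facts show thesis
    by (intro that) auto
qed

lemma tlD_pow_Qset_eq_0:
  assumes "p \<in> Qset n \<alpha> \<beta>" "(n - 1) * \<beta> < i"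
  shows "(tlD n l ^^ i) p = 0"
proof (rule ccontr)
  assume "(tlD n l ^^ i) p \<noteq> 0"
  then obtain m where m: "m \<in> keys ((tlD n l ^^ i) p)"
    by (metis all_not_in_conv keys_eq_empty)
  note facts = keys_tlD_pow_Qset[OF assms(1) m]
  show False
    using facts(3,4) mult_le_mono2[OF facts(3), of "n - 1"] assms(2) by linarith
qed

lemma lookup_eps_Qset_lead:
  fixes p :: "'k::field_char_0 mpoly"
  assumes "1 \<le> n" "1 \<le> l" "p \<in> Qset n \<alpha> \<beta>"
  shows "lookup (eps n l p) (single 0 (\<alpha> + (n - 1) * l * \<beta>) + single n \<beta>) \<noteq> 0"
proof -
  define N where "N = (n - 1) * \<beta>"
  define e where "e = single 0 (\<alpha> + l * N) + single n \<beta>"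
  have "keys e \<subseteq> {0, n}"
    using keys_add[of "single 0 (\<alpha> + l * N)" "single n \<beta>"] by (auto simp: e_def split: if_splits)
  moreover have "lookup e 0 = \<alpha> + l * N" "xdeg n e = \<beta>" "xrank n e = 0"
    using assms(1) by (auto simp: e_def lookup_add lookup_single xwdeg_add xwdeg_single)
  ultimately have e: "keys e \<subseteq> {0..n}" "lookup e 0 = \<alpha> + l * N" "xdeg n e = \<beta>" "xrank n e = 0"
    by auto
  have other_powers: "lookup ((tlD n l ^^ i) p) e = 0" if "i \<noteq> N" for i
  proof (rule ccontr)
    assume "lookup ((tlD n l ^^ i) p) e \<noteq> 0"
    then have "e \<in> keys ((tlD n l ^^ i) p)"
      by (simp add: in_keys_iff)
    from keys_tlD_pow_Qset[OF assms(3) this] e have "l * N \<le> l * i" "i \<le> N"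
      by (auto simp: N_def)
    with that assms(2) show False
      by simp
  qed
  have "{i. (tlD n l ^^ i) p \<noteq> 0} \<subseteq> {..N}"
    using tlD_pow_Qset_eq_0[OF assms(3)] unfolding N_def by (auto simp: not_less[symmetric])
  then have "lookup (eps n l p) e = inverse (of_nat (fact N)) * lookup ((tlD n l ^^ N) p) e"
    unfolding eps_eq_expE_tlD
    by (intro lookup_expE_single_power other_powers) (auto intro: finite_subset)
  moreover obtain c where "c > 0"
    "lookup ((tlD n l ^^ N) p) e = of_nat c * lookup p (single 0 \<alpha> + single 1 \<beta>)"
    using lookup_tlD_pow_extremal[OF assms(1) e(1,2), of p] e(3,4) by (auto simp: N_def)
  moreover have "lookup p (single 0 \<alpha> + single 1 \<beta>) \<noteq> 0"
    using assms(3) by (simp add: Qset_def lt_is_def in_keys_iff)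
  ultimately have "lookup (eps n l p) e \<noteq> 0"
    by simp
  then show ?thesis
    by (simp add: e_def N_def ac_simps)
qed

lemma lookup_0_less_eps_Qset:
  assumes "2 \<le> n" "1 \<le> l" "p \<in> Qset n \<alpha> \<beta>" "m \<in> keys (eps n l p)"
    and "m \<noteq> single 0 (\<alpha> + (n - 1) * l * \<beta>) + single n \<beta>"
  shows "lookup m 0 < \<alpha> + (n - 1) * l * \<beta>"
proof (rule ccontr)
  assume "\<not> ?thesis"
  then have top: "\<alpha> + l * ((n - 1) * \<beta>) \<le> lookup m 0"
    by (simp add: ac_simps)
  obtain i where i: "i \<le> (n - 1) * \<beta>" "keys m \<subseteq> {0..n}" "lookup m 0 \<le> \<alpha> + l * i"
    "xdeg n m \<le> \<beta>" "xrank n m + i \<le> (n - 1) * xdeg n m"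
    using keys_eps_Qset[OF assms(3,4)] by blast
  have "l * ((n - 1) * \<beta>) \<le> l * i"
    using top i(3) by linarith
  then have "i = (n - 1) * \<beta>"
    using i(1) assms(2) by simp
  moreover have "(n - 1) * xdeg n m \<le> (n - 1) * \<beta>"
    using i(4) by simp
  ultimately have "xrank n m = 0" "(n - 1) * \<beta> \<le> (n - 1) * xdeg n m"
    using i(5) by linarith+
  moreover from this(2) have "xdeg n m = \<beta>"
    using i(4) assms(1) by (simp add: le_antisym)
  moreover have "lookup m 0 = \<alpha> + (n - 1) * l * \<beta>"
    using top i(3) \<open>i = (n - 1) * \<beta>\<close> by (simp add: ac_simps)
  ultimately have "m = single 0 (\<alpha> + (n - 1) * l * \<beta>) + single n \<beta>"
    using xrank_eq_0[OF i(2)] assms(1) by simp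
  with assms(5) show False ..
qed

lemma lt_is_eps_Qset:
  fixes p :: "'k::field_char_0 mpoly"
  assumes "2 \<le> n" "1 \<le> l" "p \<in> Qset n \<alpha> \<beta>"
  shows "lt_is n (eps n l p) (single 0 (\<alpha> + (n - 1) * l * \<beta>) + single n \<beta>)"
  unfolding lt_is_def
proof (intro conjI ballI impI)
  show "single 0 (\<alpha> + (n - 1) * l * \<beta>) + single n \<beta> \<in> keys (eps n l p)"
    using lookup_eps_Qset_lead[OF _ assms(2,3)] assms(1) by (simp add: in_keys_iff)
  fix m assume "m \<in> keys (eps n l p)" "m \<noteq> single 0 (\<alpha> + (n - 1) * l * \<beta>) + single n \<beta>"
  then show "lex_less n m (single 0 (\<alpha> + (n - 1) * l * \<beta>) + single n \<beta>)"
    using lookup_0_less_eps_Qset[OF assms] assms(1)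
    by (intro lex_less_if_lookup_0_less) (simp add: lookup_add lookup_single)
qed

lemma in_ring_eps_Qset: "p \<in> Qset n \<alpha> \<beta> \<Longrightarrow> in_ring n (eps n l p)"
  unfolding in_ring_def by (metis keys_eps_Qset)

lemma wdeg_w1_eps_Qset:
  assumes "p \<in> Qset n \<alpha> \<beta>" "eps n l p \<noteq> 0"
  shows "wdeg n w1 (eps n l p) \<le> \<alpha> + (n - 1) * l * \<beta> + \<beta>"
proof (rule wdeg_le[OF assms(2)])
  fix m assume "m \<in> keys (eps n l p)"
  then obtain i where "i \<le> (n - 1) * \<beta>" "lookup m 0 \<le> \<alpha> + l * i" "xdeg n m \<le> \<beta>"
    using keys_eps_Qset[OF assms(1)] by metis
  moreover from this(1) have "l * i \<le> (n - 1) * l * \<beta>"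
    by (simp add: ac_simps)
  ultimately show "(\<Sum>j\<in>{0..n}. lookup m j * w1 j) \<le> \<alpha> + (n - 1) * l * \<beta> + \<beta>"
    unfolding sum_w1 by linarith
qed

lemma wdeg_w2_eps_Qset:
  assumes "3 \<le> n" "1 \<le> l" "p \<in> Qset n \<alpha> \<beta>" "eps n l p \<noteq> 0"
  shows "wdeg n (w2 n) (eps n l p) \<le> (n - 2) * (\<alpha> + (n - 1) * l * \<beta>) + (n - 1) * \<beta>"
proof (rule wdeg_le[OF assms(4)])
  fix m assume "m \<in> keys (eps n l p)"
  then obtain i where i: "i \<le> (n - 1) * \<beta>" "lookup m 0 \<le> \<alpha> + l * i" "xdeg n m \<le> \<beta>"
    "xrank n m + i \<le> (n - 1) * xdeg n m"
    using keys_eps_Qset[OF assms(3)] by metis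
  define N where "N = (n - 1) * \<beta>"
  define K where "K = (n - 2) * l"
  have "1 \<le> K"
    using assms(1,2) by (simp add: K_def)
  have "xrank n m \<le> N - i"
    using i(3,4) mult_le_mono2[OF i(3), of "n - 1"] unfolding N_def by linarith
  also have "\<dots> \<le> K * (N - i)"
    using \<open>1 \<le> K\<close> by simp
  finally have "(n - 2) * lookup m 0 + xrank n m \<le> (n - 2) * \<alpha> + K * i + K * (N - i)"
    using mult_le_mono2[OF i(2), of "n - 2"] unfolding K_def by (simp add: algebra_simps)
  also have "\<dots> = (n - 2) * \<alpha> + K * N"
    using i(1) unfolding N_def by (simp flip: add.assoc add_mult_distrib2)
  also have "\<dots> = (n - 2) * (\<alpha> + (n - 1) * l * \<beta>)"
    unfolding K_def N_def by (simp add: distrib_left ac_simps)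
  finally show "(\<Sum>j\<in>{0..n}. lookup m j * w2 n j) \<le> (n - 2) * (\<alpha> + (n - 1) * l * \<beta>) + (n - 1) * \<beta>"
    unfolding sum_w2 using mult_le_mono2[OF i(3), of "n - 1"] by linarith
qed

theorem lemma5p3:
  fixes n l \<alpha> \<beta> :: nat and p :: "'k::field_char_0 mpoly"
  assumes "n \<ge> 3" and "l \<ge> 1" and "\<alpha> \<ge> 1" and "\<beta> \<ge> 1"
    and "p \<in> Qset n \<alpha> \<beta>"
  shows "eps n l p \<in> Pset n (\<alpha> + (n - 1) * l * \<beta>) \<beta>"
proof -
  have lead: "lt_is n (eps n l p) (single 0 (\<alpha> + (n - 1) * l * \<beta>) + single n \<beta>)"
    using lt_is_eps_Qset[OF _ assms(2,5)] assms(1) by simp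
  then have "eps n l p \<noteq> 0"
    unfolding lt_is_def by auto
  with lead show ?thesis
    unfolding Pset_def
    using in_ring_eps_Qset[OF assms(5)] wdeg_w1_eps_Qset[OF assms(5)]
      wdeg_w2_eps_Qset[OF assms(1,2,5)] by simp
qed

end
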